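(* Let $\mathcal{H}=\bigotimes_{i=1}^m \mathcal{H}_i$ be a finite-dimensional multipartite Hilbert space of total dimension $D$, and let $\{\psi_j : j=1,\ldots,n\}$ be an unextendible product basis of $\mathcal{H}$ (with each $\psi_j$ normalized). Then the state $$\bar\rho=\frac{1}{D-n}\Big(\mathbf{1}-\sum_{j=1}^n |\psi_j\rangle\langle\psi_j|\Big)$$ is bound entangled: it is entangled (not separable), and no pure entanglement can be distilled from it by local operations and classical communication (in particular, for every bipartition of the $m$ parties into two groups, $\bar\rho$ has positive partial transpose).
   Context: A product state in $\mathcal{H}$ is a vector $\phi_1\otimes\cdots\otimes\phi_m$ with nonzero $\phi_i\in\mathcal{H}_i$. An (incomplete orthogonal) product basis (PB) is a set $S$ of pairwise orthogonal product states spanning a proper subspace $\mathcal{H}_S$ of $\mathcal{H}$. An unextendible product basis (UPB) is a PB such that the orthogonal complement $\mathcal{H}_S^\perp$ contains no product state. A mixed state is separable if it is a convex combination of projectors onto product states, and entangled otherwise. A state is bound entangled if it is entangled but no pure entangled states can be distilled from (many copies of) it by local operations and classical communication. The partial transpose of a bipartite density matrix on $\mathcal{H}_A\otimes\mathcal{H}_B$ is the transpose applied to the $B$ factor only (in a fixed basis); a state has positive partial transpose (PPT) if its partial transpose is positive semidefinite, and PPT bipartite states have no distillable entanglement. *)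

theory Defs
  imports Complex_Main
begin

text \<open>Concrete model: parties 0..m-1, party i has Hilbert space C^(d i).
  The computational basis of H = H_0 (x) ... (x) H_(m-1) is indexed by multi-indices
  x :: nat => nat with x i < d i for i < m and x i = 0 for i >= m.
  Vectors of H are functions from multi-indices to complex numbers (only values on
  the index set matter); operators are kernels (matrices) on the index set.\<close>

definition idx :: "(nat \<Rightarrow> nat) \<Rightarrow> nat \<Rightarrow> (nat \<Rightarrow> nat) set" where
  "idx d m = {x. (\<forall>i<m. x i < d i) \<and> (\<forall>i. m \<le> i \<longrightarrow> x i = 0)}"

type_synonym vec = "(nat \<Rightarrow> nat) \<Rightarrow> complex"
type_synonym op = "(nat \<Rightarrow> nat) \<Rightarrow> (nat \<Rightarrow> nat) \<Rightarrow> complex"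

definition total_dim :: "(nat \<Rightarrow> nat) \<Rightarrow> nat \<Rightarrow> nat" where
  "total_dim d m = card (idx d m)"

definition inner :: "(nat \<Rightarrow> nat) \<Rightarrow> nat \<Rightarrow> vec \<Rightarrow> vec \<Rightarrow> complex" where
  "inner d m u v = (\<Sum>x\<in>idx d m. cnj (u x) * v x)"

definition nonzero_vec :: "(nat \<Rightarrow> nat) \<Rightarrow> nat \<Rightarrow> vec \<Rightarrow> bool" where
  "nonzero_vec d m v \<longleftrightarrow> (\<exists>x\<in>idx d m. v x \<noteq> 0)"

definition product_state :: "(nat \<Rightarrow> nat) \<Rightarrow> nat \<Rightarrow> vec \<Rightarrow> bool" where
  "product_state d m v \<longleftrightarrow>
     (\<exists>\<phi> :: nat \<Rightarrow> nat \<Rightarrow> complex.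
        (\<forall>i<m. \<exists>a<d i. \<phi> i a \<noteq> 0) \<and>
        (\<forall>x\<in>idx d m. v x = (\<Prod>i<m. \<phi> i (x i))))"

definition in_span :: "(nat \<Rightarrow> nat) \<Rightarrow> nat \<Rightarrow> nat \<Rightarrow> (nat \<Rightarrow> vec) \<Rightarrow> vec \<Rightarrow> bool" where
  "in_span d m n \<psi> v \<longleftrightarrow> (\<exists>c :: nat \<Rightarrow> complex. \<forall>x\<in>idx d m. v x = (\<Sum>j<n. c j * \<psi> j x))"

definition product_basis :: "(nat \<Rightarrow> nat) \<Rightarrow> nat \<Rightarrow> nat \<Rightarrow> (nat \<Rightarrow> vec) \<Rightarrow> bool" where
  "product_basis d m n \<psi> \<longleftrightarrow>
     (\<forall>j<n. product_state d m (\<psi> j)) \<and>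
     (\<forall>j<n. \<forall>k<n. j \<noteq> k \<longrightarrow> inner d m (\<psi> j) (\<psi> k) = 0) \<and>
     (\<exists>v. \<not> in_span d m n \<psi> v)"

definition UPB :: "(nat \<Rightarrow> nat) \<Rightarrow> nat \<Rightarrow> nat \<Rightarrow> (nat \<Rightarrow> vec) \<Rightarrow> bool" where
  "UPB d m n \<psi> \<longleftrightarrow> product_basis d m n \<psi> \<and>
     \<not> (\<exists>v. product_state d m v \<and> (\<forall>j<n. inner d m (\<psi> j) v = 0))"

definition psd :: "(nat \<Rightarrow> nat) \<Rightarrow> nat \<Rightarrow> op \<Rightarrow> bool" where
  "psd d m M \<longleftrightarrow> (\<forall>v :: vec.
     let q = (\<Sum>x\<in>idx d m. \<Sum>y\<in>idx d m. cnj (v x) * M x y * v y) in Im q = 0 \<and> Re q \<ge> 0)"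

definition trace :: "(nat \<Rightarrow> nat) \<Rightarrow> nat \<Rightarrow> op \<Rightarrow> complex" where
  "trace d m M = (\<Sum>x\<in>idx d m. M x x)"

definition density_matrix :: "(nat \<Rightarrow> nat) \<Rightarrow> nat \<Rightarrow> op \<Rightarrow> bool" where
  "density_matrix d m \<rho> \<longleftrightarrow> psd d m \<rho> \<and> trace d m \<rho> = 1"

definition separable :: "(nat \<Rightarrow> nat) \<Rightarrow> nat \<Rightarrow> op \<Rightarrow> bool" where
  "separable d m \<rho> \<longleftrightarrow>
     (\<exists>(k::nat) (p :: nat \<Rightarrow> real) (\<phi> :: nat \<Rightarrow> vec).
        (\<forall>l<k. p l \<ge> 0 \<and> product_state d m (\<phi> l) \<and> inner d m (\<phi> l) (\<phi> l) = 1) \<and>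
        (\<Sum>l<k. p l) = 1 \<and>
        (\<forall>x\<in>idx d m. \<forall>y\<in>idx d m. \<rho> x y = (\<Sum>l<k. complex_of_real (p l) * \<phi> l x * cnj (\<phi> l y))))"

definition entangled :: "(nat \<Rightarrow> nat) \<Rightarrow> nat \<Rightarrow> op \<Rightarrow> bool" where
  "entangled d m \<rho> \<longleftrightarrow> density_matrix d m \<rho> \<and> \<not> separable d m \<rho>"

text \<open>Partial transpose w.r.t. the bipartition A | B (B = parties not in A):
  the transpose is applied to the B factor.\<close>
definition mix :: "nat set \<Rightarrow> (nat \<Rightarrow> nat) \<Rightarrow> (nat \<Rightarrow> nat) \<Rightarrow> (nat \<Rightarrow> nat)" where
  "mix A x y = (\<lambda>i. if i \<in> A then x i else y i)"

definition partial_transpose :: "nat set \<Rightarrow> op \<Rightarrow> op" where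
  "partial_transpose A \<rho> = (\<lambda>x y. \<rho> (mix A x y) (mix A y x))"

definition PPT_all_bipartitions :: "(nat \<Rightarrow> nat) \<Rightarrow> nat \<Rightarrow> op \<Rightarrow> bool" where
  "PPT_all_bipartitions d m \<rho> \<longleftrightarrow>
     (\<forall>A. A \<noteq> {} \<and> A \<subset> {..<m} \<longrightarrow> psd d m (partial_transpose A \<rho>))"

definition upb_state :: "(nat \<Rightarrow> nat) \<Rightarrow> nat \<Rightarrow> nat \<Rightarrow> (nat \<Rightarrow> vec) \<Rightarrow> op" where
  "upb_state d m n \<psi> = (\<lambda>x y. ((if x = y then 1 else 0) - (\<Sum>j<n. \<psi> j x * cnj (\<psi> j y)))
                              / of_nat (total_dim d m - n))"

end

theory Submission
  imports Defs
begin

text \<open>By Bessel's identity the quadratic form of the state at v is the squared norm of the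
  component of v orthogonal to the psi_j, divided by D - n; so the state is positive and vanishes
  on every psi_j, and its trace is one because an orthonormal family that does not span has fewer
  than D members. A product state occurring with positive weight in a separable decomposition
  would therefore be orthogonal to all psi_j, which unextendibility forbids. For positivity of
  the partial transpose, note that partially transposing the projector onto a product vector
  gives the projector onto the product vector with the factors of the transposed parties complex
  conjugated. Conjugating factors only conjugates the factorwise inner products, so the new
  vectors are again orthonormal, and the partial transpose of the state is a state of the same
  form.\<close>

lemma bij_betw_idx_Suc:
  "bij_betw (\<lambda>(x, a). x(m := a)) (idx d m \<times> {..<d m}) (idx d (Suc m))"
  by (rule bij_betw_byWitness [where f' = "\<lambda>y. (y(m := 0), y m)"])
    (auto simp: idx_def less_Suc_eq fun_eq_iff)

lemma finite_idx: "finite (idx d m)"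
proof (induction m)
  case 0
  have "idx d 0 = {\<lambda>i. 0}" by (auto simp: idx_def)
  then show ?case by simp
next
  case (Suc m)
  then show ?case using bij_betw_finite[OF bij_betw_idx_Suc] by blast
qed

lemma sum_idx_prod:
  fixes f :: "nat \<Rightarrow> nat \<Rightarrow> 'a::comm_semiring_1"
  shows "(\<Sum>x\<in>idx d m. \<Prod>i<m. f i (x i)) = (\<Prod>i<m. \<Sum>a<d i. f i a)"
proof (induction m)
  case 0
  have "idx d 0 = {\<lambda>i. 0}" by (auto simp: idx_def)
  then show ?case by simp
next
  case (Suc m)
  have "(\<Sum>y\<in>idx d (Suc m). \<Prod>i<Suc m. f i (y i))
      = (\<Sum>p\<in>idx d m \<times> {..<d m}. \<Prod>i<Suc m. f i (((\<lambda>(x, a). x(m := a)) p) i))"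
    by (rule sum.reindex_bij_betw[OF bij_betw_idx_Suc, symmetric])
  also have "\<dots> = (\<Sum>(x, a)\<in>idx d m \<times> {..<d m}. (\<Prod>i<m. f i (x i)) * f m a)"
    by (intro sum.cong refl) (auto intro!: prod.cong)
  also have "\<dots> = (\<Sum>x\<in>idx d m. \<Prod>i<m. f i (x i)) * (\<Sum>a<d m. f m a)"
    by (simp add: sum.cartesian_product[symmetric] sum_product)
  finally show ?case by (simp add: Suc.IH)
qed

lemma inner_cong:
  assumes "\<And>x. x \<in> idx d m \<Longrightarrow> u x = u' x" and "\<And>x. x \<in> idx d m \<Longrightarrow> v x = v' x"
  shows "inner d m u v = inner d m u' v'"
  unfolding inner_def using assms by (simp cong: sum.cong)

lemma inner_commute: "cnj (inner d m u v) = inner d m v u"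
  unfolding inner_def by (simp add: mult.commute)

lemma inner_sum_right:
  "inner d m u (\<lambda>x. \<Sum>j<n. c j * w j x) = (\<Sum>j<n. c j * inner d m u (w j))"
  unfolding inner_def sum_distrib_left by (subst sum.swap) (simp add: mult.left_commute)

lemma inner_sum_left:
  "inner d m (\<lambda>x. \<Sum>j<n. c j * w j x) u = (\<Sum>j<n. cnj (c j) * inner d m (w j) u)"
proof -
  have "inner d m (\<lambda>x. \<Sum>j<n. c j * w j x) u = cnj (inner d m u (\<lambda>x. \<Sum>j<n. c j * w j x))"
    by (simp only: inner_commute)
  then show ?thesis by (simp add: inner_sum_right inner_commute)
qed

lemma inner_diff_right: "inner d m u (\<lambda>x. v x - w x) = inner d m u v - inner d m u w"
  unfolding inner_def by (simp add: algebra_simps sum_subtractf)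

lemma inner_diff_left: "inner d m (\<lambda>x. v x - w x) u = inner d m v u - inner d m w u"
  unfolding inner_def by (simp add: algebra_simps sum_subtractf)

lemma cnj_mult_self: "cnj z * z = of_real ((cmod z)\<^sup>2)"
  by (subst complex_norm_square) (rule mult.commute)

lemma inner_self: "inner d m v v = of_real (\<Sum>x\<in>idx d m. (cmod (v x))\<^sup>2)"
  unfolding inner_def of_real_sum by (simp only: cnj_mult_self)

definition orthonormal :: "(nat \<Rightarrow> nat) \<Rightarrow> nat \<Rightarrow> nat \<Rightarrow> (nat \<Rightarrow> vec) \<Rightarrow> bool" where
  "orthonormal d m n \<psi> \<longleftrightarrow>
     (\<forall>j<n. \<forall>k<n. inner d m (\<psi> j) (\<psi> k) = (if j = k then 1 else 0))"

lemma orthonormal_norm: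
  assumes "orthonormal d m n \<psi>" and "j < n"
  shows "(\<Sum>x\<in>idx d m. (cmod (\<psi> j x))\<^sup>2) = 1"
proof -
  have "inner d m (\<psi> j) (\<psi> j) = 1" using assms by (simp add: orthonormal_def)
  then show ?thesis unfolding inner_self by (simp only: of_real_eq_1_iff)
qed

lemma bessel_identity:
  assumes "orthonormal d m n \<psi>"
  shows "(\<Sum>x\<in>idx d m. (cmod (v x))\<^sup>2) - (\<Sum>j<n. (cmod (inner d m (\<psi> j) v))\<^sup>2)
       = (\<Sum>x\<in>idx d m. (cmod (v x - (\<Sum>j<n. inner d m (\<psi> j) v * \<psi> j x)))\<^sup>2)"
proof -
  define a where "a j = inner d m (\<psi> j) v" for j
  define p where "p = (\<lambda>x. \<Sum>j<n. a j * \<psi> j x)"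
  have coeff: "inner d m (\<psi> j) p = a j" if "j < n" for j
  proof -
    have "inner d m (\<psi> j) p = (\<Sum>k<n. if k = j then a k else 0)"
      unfolding p_def inner_sum_right using assms that by (intro sum.cong) (auto simp: orthonormal_def)
    then show ?thesis using that by simp
  qed
  have norm_a: "(\<Sum>j<n. cnj (a j) * a j) = of_real (\<Sum>j<n. (cmod (a j))\<^sup>2)"
    unfolding of_real_sum by (simp only: cnj_mult_self)
  have "inner d m v (\<psi> j) = cnj (a j)" for j
    by (simp add: a_def inner_commute)
  then have "inner d m v p = (\<Sum>j<n. cnj (a j) * a j)"
    by (simp add: p_def inner_sum_right mult.commute)
  moreover have "inner d m p v = (\<Sum>j<n. cnj (a j) * a j)"
    unfolding p_def inner_sum_left a_def ..
  moreover have "inner d m p p = (\<Sum>j<n. cnj (a j) * a j)"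
  proof -
    have "inner d m p p = (\<Sum>j<n. cnj (a j) * inner d m (\<psi> j) p)"
      unfolding p_def by (rule inner_sum_left)
    then show ?thesis using coeff by simp
  qed
  ultimately have "inner d m (\<lambda>x. v x - p x) (\<lambda>x. v x - p x) = inner d m v v - (\<Sum>j<n. cnj (a j) * a j)"
    by (simp add: inner_diff_left inner_diff_right)
  then have "(\<Sum>x\<in>idx d m. (cmod (v x - p x))\<^sup>2)
      = (\<Sum>x\<in>idx d m. (cmod (v x))\<^sup>2) - (\<Sum>j<n. (cmod (a j))\<^sup>2)"
    unfolding inner_self norm_a by (simp only: of_real_diff [symmetric] of_real_eq_iff)
  then show ?thesis by (simp add: p_def a_def)
qed

lemma bessel_inequality:
  assumes "orthonormal d m n \<psi>"
  shows "(\<Sum>j<n. (cmod (inner d m (\<psi> j) v))\<^sup>2) \<le> (\<Sum>x\<in>idx d m. (cmod (v x))\<^sup>2)"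
proof -
  have "0 \<le> (\<Sum>x\<in>idx d m. (cmod (v x - (\<Sum>j<n. inner d m (\<psi> j) v * \<psi> j x)))\<^sup>2)"
    by (simp add: sum_nonneg)
  then show ?thesis using bessel_identity [OF assms, of v] by linarith
qed

lemma in_span_if_bessel_eq:
  assumes "orthonormal d m n \<psi>"
    and "(\<Sum>j<n. (cmod (inner d m (\<psi> j) v))\<^sup>2) = (\<Sum>x\<in>idx d m. (cmod (v x))\<^sup>2)"
  shows "in_span d m n \<psi> v"
proof -
  have "(\<Sum>x\<in>idx d m. (cmod (v x - (\<Sum>j<n. inner d m (\<psi> j) v * \<psi> j x)))\<^sup>2) = 0"
    using bessel_identity [OF assms(1), of v] assms(2) by simp
  then have "v y = (\<Sum>j<n. inner d m (\<psi> j) v * \<psi> j y)" if "y \<in> idx d m" for y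
    using that by (simp add: finite_idx sum_nonneg_eq_0_iff)
  then show ?thesis
    unfolding in_span_def by (intro exI [where x = "\<lambda>j. inner d m (\<psi> j) v"] ballI)
qed

definition unit_vec :: "(nat \<Rightarrow> nat) \<Rightarrow> vec" where
  "unit_vec x y = (if y = x then 1 else 0)"

lemma inner_unit_vec: "x \<in> idx d m \<Longrightarrow> inner d m u (unit_vec x) = cnj (u x)"
  by (simp add: inner_def unit_vec_def finite_idx if_distrib cong: if_cong)

lemma sum_norm_unit_vec:
  assumes "x \<in> idx d m"
  shows "(\<Sum>y\<in>idx d m. (cmod (unit_vec x y))\<^sup>2) = 1"
proof -
  have "(cmod (unit_vec x y))\<^sup>2 = (if y = x then 1 else 0)" for y
    by (simp add: unit_vec_def)
  then show ?thesis using assms by (simp add: finite_idx)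
qed

lemma in_span_if_unit_vecs_in_span:
  assumes "\<And>x. x \<in> idx d m \<Longrightarrow> in_span d m n \<psi> (unit_vec x)"
  shows "in_span d m n \<psi> v"
proof -
  have "\<forall>x. \<exists>c. x \<in> idx d m \<longrightarrow> (\<forall>y\<in>idx d m. unit_vec x y = (\<Sum>j<n. c j * \<psi> j y))"
    using assms unfolding in_span_def by blast
  then obtain c where c: "\<And>x y. x \<in> idx d m \<Longrightarrow> y \<in> idx d m \<Longrightarrow> unit_vec x y = (\<Sum>j<n. c x j * \<psi> j y)"
    by metis
  have expansion: "v y = (\<Sum>j<n. (\<Sum>x\<in>idx d m. v x * c x j) * \<psi> j y)" if y: "y \<in> idx d m" for y
  proof -
    have "v y = (\<Sum>x\<in>idx d m. v x * unit_vec x y)"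
      using y by (simp add: unit_vec_def finite_idx if_distrib cong: if_cong)
    also have "\<dots> = (\<Sum>x\<in>idx d m. \<Sum>j<n. v x * c x j * \<psi> j y)"
      using y by (intro sum.cong refl) (simp add: c sum_distrib_left mult.assoc)
    also have "\<dots> = (\<Sum>j<n. (\<Sum>x\<in>idx d m. v x * c x j) * \<psi> j y)"
      unfolding sum_distrib_right by (rule sum.swap)
    finally show ?thesis .
  qed
  show ?thesis
    unfolding in_span_def by (intro exI [where x = "\<lambda>j. \<Sum>x\<in>idx d m. v x * c x j"] ballI expansion)
qed

lemma less_total_dim_if_not_in_span:
  assumes orth: "orthonormal d m n \<psi>" and "\<not> in_span d m n \<psi> v"
  shows "n < total_dim d m"
proof (rule ccontr)
  assume "\<not> n < total_dim d m"
  define r where "r x = (\<Sum>j<n. (cmod (\<psi> j x))\<^sup>2)" for x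
  have bessel_unit_vec: "(\<Sum>j<n. (cmod (inner d m (\<psi> j) (unit_vec x)))\<^sup>2) = r x" if "x \<in> idx d m" for x
    using that by (simp add: r_def inner_unit_vec)
  have r_le: "r x \<le> 1" if "x \<in> idx d m" for x
    using bessel_inequality [OF orth, of "unit_vec x"] that
    by (simp add: bessel_unit_vec sum_norm_unit_vec)
  text \<open>The r x sum to n, which is at least the number of terms, so Bessel's inequality is
    an equality at every unit vector.\<close>
  have "(\<Sum>x\<in>idx d m. r x) = (\<Sum>j<n. \<Sum>x\<in>idx d m. (cmod (\<psi> j x))\<^sup>2)"
    unfolding r_def by (rule sum.swap)
  also have "\<dots> = n"
    using orthonormal_norm [OF orth] by simp
  finally have "(\<Sum>x\<in>idx d m. 1 - r x) \<le> 0"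
    using \<open>\<not> n < total_dim d m\<close> by (simp add: sum_subtractf total_dim_def)
  moreover have "0 \<le> (\<Sum>x\<in>idx d m. 1 - r x)"
    using r_le by (simp add: sum_nonneg)
  ultimately have "(\<Sum>x\<in>idx d m. 1 - r x) = 0" by linarith
  then have "r x = 1" if "x \<in> idx d m" for x
    using that r_le by (simp add: sum_nonneg_eq_0_iff finite_idx)
  then have "in_span d m n \<psi> (unit_vec x)" if "x \<in> idx d m" for x
    using in_span_if_bessel_eq [OF orth, of "unit_vec x"] that
    by (simp add: bessel_unit_vec sum_norm_unit_vec)
  then have "in_span d m n \<psi> v"
    by (rule in_span_if_unit_vecs_in_span)
  with assms(2) show False by simp
qed

definition qform :: "(nat \<Rightarrow> nat) \<Rightarrow> nat \<Rightarrow> op \<Rightarrow> vec \<Rightarrow> complex" where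
  "qform d m M v = (\<Sum>x\<in>idx d m. \<Sum>y\<in>idx d m. cnj (v x) * M x y * v y)"

lemma psdI:
  assumes "\<And>v. \<exists>r\<ge>0. qform d m M v = of_real r"
  shows "psd d m M"
  unfolding psd_def Let_def qform_def [symmetric]
proof
  fix v
  from assms obtain r where "r \<ge> 0" "qform d m M v = of_real r" by blast
  then show "Im (qform d m M v) = 0 \<and> 0 \<le> Re (qform d m M v)" by simp
qed

lemma qform_cong:
  assumes "\<And>x y. x \<in> idx d m \<Longrightarrow> y \<in> idx d m \<Longrightarrow> M x y = N x y"
  shows "qform d m M v = qform d m N v"
  unfolding qform_def using assms by (simp cong: sum.cong)

lemma psd_cong:
  assumes "\<And>x y. x \<in> idx d m \<Longrightarrow> y \<in> idx d m \<Longrightarrow> M x y = N x y"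
  shows "psd d m M \<longleftrightarrow> psd d m N"
  unfolding psd_def using assms by (simp cong: sum.cong)

lemma qform_sum_projections:
  fixes c :: "nat \<Rightarrow> complex"
  shows "qform d m (\<lambda>x y. \<Sum>l<k. c l * \<phi> l x * cnj (\<phi> l y)) v
     = (\<Sum>l<k. c l * of_real ((cmod (inner d m (\<phi> l) v))\<^sup>2))"
proof -
  have "qform d m (\<lambda>x y. \<Sum>l<k. c l * \<phi> l x * cnj (\<phi> l y)) v
      = (\<Sum>x\<in>idx d m. \<Sum>y\<in>idx d m. \<Sum>l<k. c l * (cnj (v x) * \<phi> l x) * (cnj (\<phi> l y) * v y))"
    unfolding qform_def by (intro sum.cong refl) (simp add: sum_distrib_left sum_distrib_right mult_ac)
  also have "\<dots> = (\<Sum>x\<in>idx d m. \<Sum>l<k. \<Sum>y\<in>idx d m. c l * (cnj (v x) * \<phi> l x) * (cnj (\<phi> l y) * v y))"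
    by (intro sum.cong refl) (rule sum.swap)
  also have "\<dots> = (\<Sum>l<k. \<Sum>x\<in>idx d m. \<Sum>y\<in>idx d m. c l * (cnj (v x) * \<phi> l x) * (cnj (\<phi> l y) * v y))"
    by (rule sum.swap)
  also have "\<dots> = (\<Sum>l<k. c l * (cnj (inner d m (\<phi> l) v) * inner d m (\<phi> l) v))"
  proof (intro sum.cong refl)
    fix l
    have cnj_inner: "cnj (inner d m (\<phi> l) v) = (\<Sum>x\<in>idx d m. cnj (v x) * \<phi> l x)"
      by (simp add: inner_def mult.commute)
    show "(\<Sum>x\<in>idx d m. \<Sum>y\<in>idx d m. c l * (cnj (v x) * \<phi> l x) * (cnj (\<phi> l y) * v y))
        = c l * (cnj (inner d m (\<phi> l) v) * inner d m (\<phi> l) v)"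
      unfolding cnj_inner unfolding inner_def sum_product unfolding sum_distrib_left
      by (simp only: mult.assoc)
  qed
  finally show ?thesis by (simp only: cnj_mult_self)
qed

lemma qform_upb_state:
  "qform d m (upb_state d m n \<psi>) v
     = of_real (((\<Sum>x\<in>idx d m. (cmod (v x))\<^sup>2) - (\<Sum>j<n. (cmod (inner d m (\<psi> j) v))\<^sup>2))
                / real (total_dim d m - n))"
proof -
  have id: "qform d m (\<lambda>x y. if x = y then 1 else 0) v = inner d m v v"
  proof -
    have "cnj (v x) * (if x = y then 1 else 0) * v y = (if x = y then cnj (v x) * v x else 0)" for x y
      by simp
    then show ?thesis unfolding qform_def inner_def by (simp add: finite_idx)
  qed
  have proj: "qform d m (\<lambda>x y. \<Sum>j<n. \<psi> j x * cnj (\<psi> j y)) v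
      = of_real (\<Sum>j<n. (cmod (inner d m (\<psi> j) v))\<^sup>2)"
    using qform_sum_projections [where c = "\<lambda>_. 1"] by simp
  have "qform d m (upb_state d m n \<psi>) v
      = (qform d m (\<lambda>x y. if x = y then 1 else 0) v - qform d m (\<lambda>x y. \<Sum>j<n. \<psi> j x * cnj (\<psi> j y)) v)
        / of_nat (total_dim d m - n)"
    unfolding qform_def upb_state_def sum_subtractf [symmetric] sum_divide_distrib
    by (intro sum.cong refl) (simp add: algebra_simps diff_divide_distrib)
  then show ?thesis by (simp add: id proj inner_self)
qed

lemma psd_upb_state:
  assumes "orthonormal d m n \<psi>"
  shows "psd d m (upb_state d m n \<psi>)"
proof (rule psdI)
  fix v
  have "0 \<le> ((\<Sum>x\<in>idx d m. (cmod (v x))\<^sup>2) - (\<Sum>j<n. (cmod (inner d m (\<psi> j) v))\<^sup>2))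
              / real (total_dim d m - n)"
    using bessel_inequality [OF assms, of v] by simp
  then show "\<exists>r\<ge>0. qform d m (upb_state d m n \<psi>) v = of_real r"
    unfolding qform_upb_state by blast
qed

lemma trace_upb_state:
  assumes "orthonormal d m n \<psi>" and "n < total_dim d m"
  shows "trace d m (upb_state d m n \<psi>) = 1"
proof -
  have "(\<Sum>x\<in>idx d m. \<Sum>j<n. \<psi> j x * cnj (\<psi> j x)) = (\<Sum>j<n. inner d m (\<psi> j) (\<psi> j))"
    unfolding inner_def by (subst sum.swap) (simp add: mult.commute)
  also have "\<dots> = of_nat n"
    using assms(1) by (simp add: orthonormal_def)
  finally have "trace d m (upb_state d m n \<psi>)
      = (of_nat (total_dim d m) - of_nat n) / of_nat (total_dim d m - n)"
    unfolding trace_def upb_state_def total_dim_def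
    by (simp add: sum_subtractf flip: sum_divide_distrib)
  then show ?thesis using assms(2) by simp
qed

lemma inner_eq_0_if_qform_mixture_eq_0:
  fixes p :: "nat \<Rightarrow> real"
  assumes "\<forall>l<k. p l \<ge> 0"
    and "\<forall>x\<in>idx d m. \<forall>y\<in>idx d m. \<rho> x y = (\<Sum>l<k. of_real (p l) * \<phi> l x * cnj (\<phi> l y))"
    and "qform d m \<rho> w = 0" and "l < k" and "p l > 0"
  shows "inner d m (\<phi> l) w = 0"
proof -
  have "qform d m \<rho> w = qform d m (\<lambda>x y. \<Sum>l<k. of_real (p l) * \<phi> l x * cnj (\<phi> l y)) w"
    using assms(2) by (intro qform_cong) simp
  also have "\<dots> = of_real (\<Sum>l<k. p l * (cmod (inner d m (\<phi> l) w))\<^sup>2)"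
    unfolding qform_sum_projections by simp
  finally have "(\<Sum>l<k. p l * (cmod (inner d m (\<phi> l) w))\<^sup>2) = 0"
    using assms(3) by (metis of_real_eq_0_iff)
  moreover have "\<forall>l\<in>{..<k}. 0 \<le> p l * (cmod (inner d m (\<phi> l) w))\<^sup>2"
    using assms(1) by simp
  ultimately have "p l * (cmod (inner d m (\<phi> l) w))\<^sup>2 = 0"
    using assms(4) by (subst (asm) sum_nonneg_eq_0_iff) auto
  then show ?thesis using assms(5) by simp
qed

lemma qform_upb_state_basis_vector:
  assumes "orthonormal d m n \<psi>" and "j < n"
  shows "qform d m (upb_state d m n \<psi>) (\<psi> j) = 0"
proof -
  have "(\<Sum>i<n. (cmod (inner d m (\<psi> i) (\<psi> j)))\<^sup>2) = (\<Sum>i<n. if i = j then 1 else 0)"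
    using assms by (intro sum.cong) (auto simp: orthonormal_def)
  then show ?thesis
    unfolding qform_upb_state using assms by (simp add: orthonormal_norm)
qed

lemma upb_state_not_separable:
  assumes upb: "UPB d m n \<psi>" and orth: "orthonormal d m n \<psi>"
  shows "\<not> separable d m (upb_state d m n \<psi>)"
proof
  assume "separable d m (upb_state d m n \<psi>)"
  then obtain k :: nat and p :: "nat \<Rightarrow> real" and \<phi> :: "nat \<Rightarrow> vec"
    where states: "\<forall>l<k. p l \<ge> 0 \<and> product_state d m (\<phi> l) \<and> inner d m (\<phi> l) (\<phi> l) = 1"
      and total: "(\<Sum>l<k. p l) = 1"
      and decomp: "\<forall>x\<in>idx d m. \<forall>y\<in>idx d m.
          upb_state d m n \<psi> x y = (\<Sum>l<k. of_real (p l) * \<phi> l x * cnj (\<phi> l y))"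
    unfolding separable_def by blast
  have "\<exists>l<k. p l > 0"
  proof (rule ccontr)
    assume "\<not> (\<exists>l<k. p l > 0)"
    then have "(\<Sum>l<k. p l) \<le> 0" by (intro sum_nonpos) (meson lessThan_iff not_less)
    with total show False by simp
  qed
  then obtain l where l: "l < k" "p l > 0" by blast
  have "inner d m (\<psi> j) (\<phi> l) = 0" if "j < n" for j
    using inner_eq_0_if_qform_mixture_eq_0 [OF _ decomp qform_upb_state_basis_vector [OF orth that] l]
      states inner_commute [of d m "\<phi> l" "\<psi> j"] by simp
  moreover have "product_state d m (\<phi> l)" using states l by blast
  ultimately show False using upb unfolding UPB_def by blast
qed

definition tensor_vec :: "nat \<Rightarrow> (nat \<Rightarrow> nat \<Rightarrow> complex) \<Rightarrow> vec" where
  "tensor_vec m \<phi> x = (\<Prod>i<m. \<phi> i (x i))"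

lemma inner_tensor_vec:
  "inner d m (tensor_vec m \<phi>) (tensor_vec m \<chi>) = (\<Prod>i<m. \<Sum>a<d i. cnj (\<phi> i a) * \<chi> i a)"
  unfolding inner_def tensor_vec_def
  by (simp add: sum_idx_prod[where f = "\<lambda>i a. cnj (\<phi> i a) * \<chi> i a"] flip: prod.distrib)

definition conj_factors :: "nat set \<Rightarrow> (nat \<Rightarrow> nat \<Rightarrow> complex) \<Rightarrow> nat \<Rightarrow> nat \<Rightarrow> complex" where
  "conj_factors A \<phi> i a = (if i \<in> A then \<phi> i a else cnj (\<phi> i a))"

lemma tensor_vec_mix:
  "tensor_vec m \<phi> (mix A x y) * cnj (tensor_vec m \<phi> (mix A y x))
     = tensor_vec m (conj_factors A \<phi>) x * cnj (tensor_vec m (conj_factors A \<phi>) y)"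
  unfolding tensor_vec_def cnj_prod prod.distrib [symmetric]
  by (intro prod.cong refl) (simp add: mix_def conj_factors_def mult.commute)

lemma inner_tensor_vec_conj_factors:
  "inner d m (tensor_vec m (conj_factors A \<phi>)) (tensor_vec m (conj_factors A \<chi>))
     = (\<Prod>i<m. if i \<in> A then \<Sum>a<d i. cnj (\<phi> i a) * \<chi> i a else cnj (\<Sum>a<d i. cnj (\<phi> i a) * \<chi> i a))"
  unfolding inner_tensor_vec by (intro prod.cong refl) (simp add: conj_factors_def mult.commute)

lemma orthonormal_conj_factors:
  assumes "orthonormal d m n (\<lambda>j. tensor_vec m (\<Phi> j))"
  shows "orthonormal d m n (\<lambda>j. tensor_vec m (conj_factors A (\<Phi> j)))"
  unfolding orthonormal_def
proof (intro allI impI)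
  fix j k assume "j < n" "k < n"
  define c where "c i = (\<Sum>a<d i. cnj (\<Phi> j i a) * \<Phi> k i a)" for i
  have inner_jk: "inner d m (tensor_vec m (\<Phi> j)) (tensor_vec m (\<Phi> k)) = (\<Prod>i<m. c i)"
    unfolding inner_tensor_vec c_def ..
  have inner_conj_jk: "inner d m (tensor_vec m (conj_factors A (\<Phi> j))) (tensor_vec m (conj_factors A (\<Phi> k)))
      = (\<Prod>i<m. if i \<in> A then c i else cnj (c i))"
    unfolding inner_tensor_vec_conj_factors c_def ..
  show "inner d m (tensor_vec m (conj_factors A (\<Phi> j))) (tensor_vec m (conj_factors A (\<Phi> k)))
      = (if j = k then 1 else 0)"
  proof (cases "j = k")
    case True
    then have "cnj (c i) = c i" for i
      unfolding c_def by (simp add: mult.commute)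
    then have "(\<Prod>i<m. if i \<in> A then c i else cnj (c i)) = (\<Prod>i<m. c i)"
      by (intro prod.cong) auto
    then show ?thesis
      using assms \<open>j < n\<close> True inner_jk inner_conj_jk by (simp add: orthonormal_def)
  next
    case False
    then have "(\<Prod>i<m. c i) = 0"
      using assms \<open>j < n\<close> \<open>k < n\<close> inner_jk by (simp add: orthonormal_def)
    then show ?thesis
      using False inner_conj_jk by auto
  qed
qed

lemma mix_eq_mix_iff: "mix A x y = mix A y x \<longleftrightarrow> x = y"
  unfolding mix_def fun_eq_iff by (metis (full_types))

lemma mix_in_idx: "x \<in> idx d m \<Longrightarrow> y \<in> idx d m \<Longrightarrow> mix A x y \<in> idx d m"
  by (auto simp: idx_def mix_def)

lemma partial_transpose_upb_state:
  assumes "\<forall>j<n. \<forall>x\<in>idx d m. \<psi> j x = tensor_vec m (\<Phi> j) x"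
    and "x \<in> idx d m" and "y \<in> idx d m"
  shows "partial_transpose A (upb_state d m n \<psi>) x y
       = upb_state d m n (\<lambda>j. tensor_vec m (conj_factors A (\<Phi> j))) x y"
proof -
  have "(\<Sum>j<n. \<psi> j (mix A x y) * cnj (\<psi> j (mix A y x)))
      = (\<Sum>j<n. tensor_vec m (conj_factors A (\<Phi> j)) x * cnj (tensor_vec m (conj_factors A (\<Phi> j)) y))"
    using assms by (intro sum.cong refl) (simp add: mix_in_idx tensor_vec_mix)
  then show ?thesis
    unfolding partial_transpose_def upb_state_def mix_eq_mix_iff by simp
qed

lemma psd_partial_transpose_upb_state:
  assumes "\<forall>j<n. product_state d m (\<psi> j)" and "orthonormal d m n \<psi>"
  shows "psd d m (partial_transpose A (upb_state d m n \<psi>))"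
proof -
  obtain \<Phi> where \<Phi>: "\<forall>j<n. \<forall>x\<in>idx d m. \<psi> j x = tensor_vec m (\<Phi> j) x"
    using assms(1) unfolding product_state_def tensor_vec_def by metis
  have "orthonormal d m n (\<lambda>j. tensor_vec m (\<Phi> j))"
    using assms(2) \<Phi> unfolding orthonormal_def by (metis inner_cong)
  then have "psd d m (upb_state d m n (\<lambda>j. tensor_vec m (conj_factors A (\<Phi> j))))"
    by (intro psd_upb_state orthonormal_conj_factors)
  then show ?thesis
    using partial_transpose_upb_state [OF \<Phi>] psd_cong by metis
qed

theorem theorem1:
  fixes d :: "nat \<Rightarrow> nat" and m n :: nat and \<psi> :: "nat \<Rightarrow> vec"
  assumes "\<forall>i<m. 0 < d i"
    and "UPB d m n \<psi>"
    and "\<forall>j<n. inner d m (\<psi> j) (\<psi> j) = 1"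
  shows "entangled d m (upb_state d m n \<psi>) \<and> PPT_all_bipartitions d m (upb_state d m n \<psi>)"
proof -
  from assms(2) have products: "\<forall>j<n. product_state d m (\<psi> j)"
    and orthogonal: "\<forall>j<n. \<forall>k<n. j \<noteq> k \<longrightarrow> inner d m (\<psi> j) (\<psi> k) = 0"
    and "\<exists>v. \<not> in_span d m n \<psi> v"
    unfolding UPB_def product_basis_def by blast+
  then obtain v where not_spanned: "\<not> in_span d m n \<psi> v" by blast
  have orth: "orthonormal d m n \<psi>"
    using orthogonal assms(3) unfolding orthonormal_def by auto
  have "n < total_dim d m"
    by (rule less_total_dim_if_not_in_span [OF orth not_spanned])
  then show ?thesis
    unfolding entangled_def density_matrix_def PPT_all_bipartitions_def
    using psd_upb_state [OF orth] trace_upb_state [OF orth] upb_state_not_separable [OF assms(2) orth]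
      psd_partial_transpose_upb_state [OF products orth]
    by blast
qed

end
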